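(* Let $G$ be a graph, and let $B,C\subseteq V(G)$ where $B$ covers $C$. Suppose every induced subgraph $J$ of $G$ with $\omega(J)<\omega(G)$ has chromatic number at most $\tau$. Let the enumeration $(b_1,\ldots,b_m)$ of $B$ and the grading $(W_1,\ldots,W_n)$ of $G[C]$ be compatible, and let $(W_1,\ldots,W_n)$ be $w$-colourable. Let $H$ be the subgraph of $G$ with vertex set $C$ and edge set the set of all square edges. Then $\chi(G[C])\le w\tau\chi(H)$.
   Context: Graphs are finite and simple. $B$ covers $C$ means $B\cap C=\emptyset$ and every vertex in $C$ has a neighbour in $B$. Given an enumeration $(b_1,\ldots,b_m)$ of $B$, $b_i$ is earlier than $b_j$ if $i<j$, and for $v\in C$ the earliest parent of $v$ is $b_i$ with $i$ minimum such that $b_i$ is adjacent to $v$. An edge $uv$ of $G[C]$ is square if the earliest parent of $u$ is nonadjacent to $v$ and the earliest parent of $v$ is nonadjacent to $u$. A grading of $G[C]$ is a sequence $(W_1,\ldots,W_n)$ of pairwise disjoint subsets of $C$ with union $C$; it is $w$-colourable if $\chi(G[W_i])\le w$ for all $i$; $u$ is earlier than $v$ if $u\in W_i$, $v\in W_j$, $i<j$. The enumeration and the grading are compatible if for all $u,v\in C$ with $u$ earlier than $v$, the earliest parent of $u$ is earlier than the earliest parent of $v$. *)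

theory Defs
  imports Main
begin

definition graph :: "'a set \<Rightarrow> ('a \<Rightarrow> 'a \<Rightarrow> bool) \<Rightarrow> bool" where
  "graph V E \<longleftrightarrow> finite V \<and> (\<forall>u v. E u v \<longrightarrow> u \<in> V \<and> v \<in> V)
     \<and> (\<forall>u v. E u v \<longrightarrow> E v u) \<and> (\<forall>v. \<not> E v v)"

definition colourable :: "'a set \<Rightarrow> ('a \<Rightarrow> 'a \<Rightarrow> bool) \<Rightarrow> nat \<Rightarrow> bool" where
  "colourable S E k \<longleftrightarrow> (\<exists>f::'a \<Rightarrow> nat. (\<forall>v\<in>S. f v < k) \<and>
      (\<forall>u\<in>S. \<forall>v\<in>S. E u v \<longrightarrow> f u \<noteq> f v))"

text \<open>Chromatic number of the graph with vertex set S and edges E restricted to S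
  (for S a subset of V(G), this is the chromatic number of G[S]).\<close>
definition chromatic :: "'a set \<Rightarrow> ('a \<Rightarrow> 'a \<Rightarrow> bool) \<Rightarrow> nat" where
  "chromatic S E = (LEAST k. colourable S E k)"

definition clique :: "'a set \<Rightarrow> ('a \<Rightarrow> 'a \<Rightarrow> bool) \<Rightarrow> 'a set \<Rightarrow> bool" where
  "clique S E K \<longleftrightarrow> K \<subseteq> S \<and> (\<forall>u\<in>K. \<forall>v\<in>K. u \<noteq> v \<longrightarrow> E u v)"

definition clique_number :: "'a set \<Rightarrow> ('a \<Rightarrow> 'a \<Rightarrow> bool) \<Rightarrow> nat" where
  "clique_number S E = Max {card K | K. clique S E K}"

definition covers :: "('a \<Rightarrow> 'a \<Rightarrow> bool) \<Rightarrow> 'a set \<Rightarrow> 'a set \<Rightarrow> bool" where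
  "covers E B C \<longleftrightarrow> B \<inter> C = {} \<and> (\<forall>v\<in>C. \<exists>b\<in>B. E b v)"

definition enumeration :: "'a list \<Rightarrow> 'a set \<Rightarrow> bool" where
  "enumeration bs B \<longleftrightarrow> distinct bs \<and> set bs = B"

definition earlier_in :: "'a list \<Rightarrow> 'a \<Rightarrow> 'a \<Rightarrow> bool" where
  "earlier_in bs x y \<longleftrightarrow> (\<exists>i j. i < j \<and> j < length bs \<and> bs ! i = x \<and> bs ! j = y)"

definition earliest_parent :: "('a \<Rightarrow> 'a \<Rightarrow> bool) \<Rightarrow> 'a list \<Rightarrow> 'a \<Rightarrow> 'a" where
  "earliest_parent E bs v = bs ! (LEAST i. i < length bs \<and> E (bs ! i) v)"

definition square_edge :: "('a \<Rightarrow> 'a \<Rightarrow> bool) \<Rightarrow> 'a list \<Rightarrow> 'a set \<Rightarrow> 'a \<Rightarrow> 'a \<Rightarrow> bool" where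
  "square_edge E bs C u v \<longleftrightarrow> u \<in> C \<and> v \<in> C \<and> E u v \<and>
      \<not> E (earliest_parent E bs u) v \<and> \<not> E (earliest_parent E bs v) u"

definition grading :: "'a set list \<Rightarrow> 'a set \<Rightarrow> bool" where
  "grading Ws C \<longleftrightarrow> (\<forall>i<length Ws. \<forall>j<length Ws. i \<noteq> j \<longrightarrow> Ws ! i \<inter> Ws ! j = {})
      \<and> \<Union>(set Ws) = C"

definition grading_colourable :: "('a \<Rightarrow> 'a \<Rightarrow> bool) \<Rightarrow> 'a set list \<Rightarrow> nat \<Rightarrow> bool" where
  "grading_colourable E Ws w \<longleftrightarrow> (\<forall>i<length Ws. chromatic (Ws ! i) E \<le> w)"

definition grading_earlier :: "'a set list \<Rightarrow> 'a \<Rightarrow> 'a \<Rightarrow> bool" where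
  "grading_earlier Ws u v \<longleftrightarrow> (\<exists>i j. i < j \<and> j < length Ws \<and> u \<in> Ws ! i \<and> v \<in> Ws ! j)"

definition compatible :: "('a \<Rightarrow> 'a \<Rightarrow> bool) \<Rightarrow> 'a list \<Rightarrow> 'a set list \<Rightarrow> 'a set \<Rightarrow> bool" where
  "compatible E bs Ws C \<longleftrightarrow> (\<forall>u\<in>C. \<forall>v\<in>C. grading_earlier Ws u v \<longrightarrow>
      earlier_in bs (earliest_parent E bs u) (earliest_parent E bs v))"

end

theory Submission
  imports Defs
begin

text \<open>Colour \<open>G[C]\<close> by a triple: a colour of \<open>v\<close> in the square graph \<open>H\<close>, a colour of \<open>v\<close>
  inside its part of the grading, and a colour within the class of all vertices sharing the
  first two. Such a class \<open>Y\<close> contains no square edge and no edge inside a part, so in a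
  nonempty clique \<open>K\<close> of \<open>Y\<close> the vertex \<open>u\<close> of latest part is joined to every other
  \<open>x \<in> K\<close> by a non-square edge with \<open>x\<close> earlier than \<open>u\<close>. By compatibility the earliest parent
  of \<open>x\<close> precedes that of \<open>u\<close>, hence is not adjacent to \<open>u\<close>; so the earliest parent of \<open>u\<close> is
  adjacent to \<open>x\<close>, and it extends \<open>K\<close> to a larger clique of \<open>G\<close>. Thus \<open>\<omega>(G[Y]) < \<omega>(G)\<close> and
  \<open>\<chi>(G[Y]) \<le> \<tau>\<close>.\<close>

lemma colourable_mono:
  assumes "colourable S E k" "k \<le> l"
  shows "colourable S E l"
  using assms unfolding colourable_def by (auto intro: order_less_le_trans)

lemma colourable_card:
  assumes "finite S" "\<And>v. v \<in> S \<Longrightarrow> \<not> E v v"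
  shows "colourable S E (card S)"
proof -
  obtain f where "bij_betw f S {0..<card S}"
    using ex_bij_betw_finite_nat assms(1) by blast
  then have "(\<forall>v\<in>S. f v < card S) \<and> (\<forall>u\<in>S. \<forall>v\<in>S. u \<noteq> v \<longrightarrow> f u \<noteq> f v)"
    unfolding bij_betw_def inj_on_def by auto
  then show ?thesis
    unfolding colourable_def using assms(2) by metis
qed

lemma chromatic_le:
  assumes "colourable S E k"
  shows "chromatic S E \<le> k"
  unfolding chromatic_def using assms by (rule Least_le)

lemma colourable_iff_chromatic_le:
  assumes "finite S" "\<And>v. v \<in> S \<Longrightarrow> \<not> E v v"
  shows "colourable S E k \<longleftrightarrow> chromatic S E \<le> k"
proof
  assume "chromatic S E \<le> k"
  moreover have "colourable S E (chromatic S E)"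
    unfolding chromatic_def using colourable_card[OF assms] by (rule LeastI)
  ultimately show "colourable S E k"
    using colourable_mono by blast
qed (rule chromatic_le)

lemma colourable_by_fibres:
  fixes \<phi> :: "'a \<Rightarrow> nat"
  assumes \<phi>: "\<forall>v\<in>S. \<phi> v < m"
    and fibres: "\<And>a. a < m \<Longrightarrow> colourable {v\<in>S. \<phi> v = a} E t"
  shows "colourable S E (m * t)"
proof -
  have "\<forall>a. \<exists>f::'a \<Rightarrow> nat. a < m \<longrightarrow> (\<forall>v\<in>{v\<in>S. \<phi> v = a}. f v < t) \<and>
      (\<forall>u\<in>{v\<in>S. \<phi> v = a}. \<forall>v\<in>{v\<in>S. \<phi> v = a}. E u v \<longrightarrow> f u \<noteq> f v)"
    using fibres unfolding colourable_def by blast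
  then obtain c where c: "\<forall>a<m. (\<forall>v\<in>{v\<in>S. \<phi> v = a}. c a v < t) \<and>
      (\<forall>u\<in>{v\<in>S. \<phi> v = a}. \<forall>v\<in>{v\<in>S. \<phi> v = a}. E u v \<longrightarrow> c a u \<noteq> c a v)"
    by (rule choice[THEN exE]) blast
  define f where "f v = \<phi> v * t + c (\<phi> v) v" for v
  have c_less: "c (\<phi> v) v < t" if "v \<in> S" for v
    using c \<phi> that by auto
  have f_div: "f v div t = \<phi> v" and f_mod: "f v mod t = c (\<phi> v) v" if "v \<in> S" for v
    using c_less[OF that] unfolding f_def by simp_all
  have "f v < m * t" if v: "v \<in> S" for v
  proof -
    have "f v < (\<phi> v + 1) * t"
      using c_less[OF v] unfolding f_def by simp
    also have "\<dots> \<le> m * t"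
      using \<phi> v by (intro mult_right_mono) auto
    finally show ?thesis .
  qed
  moreover have "f u \<noteq> f v" if uv: "u \<in> S" "v \<in> S" "E u v" for u v
  proof
    assume "f u = f v"
    then have "\<phi> u = \<phi> v" "c (\<phi> u) u = c (\<phi> v) v"
      using f_div f_mod uv by metis+
    then show False
      using c \<phi> uv by auto
  qed
  ultimately show ?thesis
    unfolding colourable_def by blast
qed

lemma finite_clique_cards:
  assumes "finite S"
  shows "finite {card K | K. clique S E K}"
proof -
  have "{card K | K. clique S E K} \<subseteq> card ` Pow S"
    unfolding clique_def by auto
  then show ?thesis
    using assms finite_subset by blast
qed

lemma clique_card_le_clique_number:
  assumes "finite S" "clique S E K"
  shows "card K \<le> clique_number S E"
  unfolding clique_number_def using finite_clique_cards[OF assms(1)] assms(2) by (auto intro: Max_ge)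

lemma clique_number_attained:
  assumes "finite S"
  obtains K where "clique S E K" "card K = clique_number S E"
proof -
  have "clique S E {}"
    unfolding clique_def by simp
  then have "clique_number S E \<in> {card K | K. clique S E K}"
    unfolding clique_number_def using finite_clique_cards[OF assms] by (intro Max_in) auto
  then show ?thesis
    using that by force
qed

lemma clique_number_less:
  assumes "finite V" "Y \<subseteq> V"
    and extend: "\<And>K. clique Y E K \<Longrightarrow> \<exists>K'. clique V E K' \<and> card K < card K'"
  shows "clique_number Y E < clique_number V E"
proof -
  obtain K where K: "clique Y E K" "card K = clique_number Y E"
    using clique_number_attained assms(1,2) finite_subset by metis
  then obtain K' where "clique V E K'" "card K < card K'"
    using extend by blast
  then show ?thesis
    using K(2) clique_card_le_clique_number[OF assms(1)] by fastforce
qed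

lemma earliest_parent_conv_nth:
  assumes "\<exists>b\<in>set bs. E b v"
  obtains j where "j < length bs" "earliest_parent E bs v = bs ! j" "E (bs ! j) v"
    "\<forall>i<j. \<not> E (bs ! i) v"
proof -
  let ?P = "\<lambda>i. i < length bs \<and> E (bs ! i) v"
  define j where "j = (LEAST i. ?P i)"
  have "\<exists>i. ?P i"
    using assms by (auto simp: in_set_conv_nth)
  then have j: "?P j"
    unfolding j_def by (rule LeastI_ex)
  moreover have "\<not> E (bs ! i) v" if "i < j" for i
    using not_less_Least[of i ?P] that j unfolding j_def by simp
  moreover have "earliest_parent E bs v = bs ! j"
    unfolding earliest_parent_def j_def ..
  ultimately show ?thesis
    using that by blast
qed

lemma earliest_parent_adjacent:
  assumes "\<exists>b\<in>set bs. E b v"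
  shows "earliest_parent E bs v \<in> set bs" "E (earliest_parent E bs v) v"
proof -
  obtain j where "j < length bs" "earliest_parent E bs v = bs ! j" "E (bs ! j) v"
    using earliest_parent_conv_nth[of bs E v] assms by blast
  then show "earliest_parent E bs v \<in> set bs" "E (earliest_parent E bs v) v"
    by simp_all
qed

lemma not_adjacent_if_earlier_than_earliest_parent:
  assumes "distinct bs" "\<exists>b\<in>set bs. E b v"
    and "earlier_in bs b (earliest_parent E bs v)"
  shows "\<not> E b v"
proof -
  obtain j where j: "j < length bs" "earliest_parent E bs v = bs ! j" "\<forall>i<j. \<not> E (bs ! i) v"
    using earliest_parent_conv_nth[of bs E v] assms(2) by blast
  obtain i j' where i: "i < j'" "bs ! i = b" and j': "j' < length bs" "bs ! j' = bs ! j"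
    using assms(3) unfolding earlier_in_def j(2) by blast
  have "j' = j"
    using nth_eq_iff_index_eq[OF assms(1) j'(1) j(1)] j'(2) by simp
  then show ?thesis
    using i j(3) by blast
qed

lemma grading_latest_vertex:
  assumes "grading Ws C" "K \<subseteq> C" "finite K" "K \<noteq> {}"
  obtains u where "u \<in> K"
    "\<forall>x\<in>K. grading_earlier Ws x u \<or> (\<exists>i<length Ws. x \<in> Ws ! i \<and> u \<in> Ws ! i)"
proof -
  define part where "part v = (LEAST i. i < length Ws \<and> v \<in> Ws ! i)" for v
  have part: "part v < length Ws \<and> v \<in> Ws ! part v" if "v \<in> C" for v
  proof -
    have "\<exists>i. i < length Ws \<and> v \<in> Ws ! i"
      using that assms(1) unfolding grading_def by (auto simp: in_set_conv_nth)
    then show ?thesis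
      unfolding part_def by (rule LeastI_ex)
  qed
  have "Max (part ` K) \<in> part ` K"
    using assms(3,4) by simp
  then obtain u where u: "u \<in> K" "part u = Max (part ` K)"
    by auto
  have "grading_earlier Ws x u \<or> (\<exists>i<length Ws. x \<in> Ws ! i \<and> u \<in> Ws ! i)" if "x \<in> K" for x
  proof -
    have "part x \<le> part u"
      using u that assms(3) by simp
    then consider "part x < part u" | "part x = part u"
      by linarith
    then show ?thesis
      using part u(1) that assms(2) unfolding grading_earlier_def by (cases; metis subsetD)
  qed
  then show ?thesis
    using that u(1) by blast
qed

lemma grading_part_colouring:
  assumes "grading Ws C" "finite C" "\<And>v. v \<in> C \<Longrightarrow> \<not> E v v" "grading_colourable E Ws w"
  obtains k where "\<forall>v\<in>C. k v < w"
    "\<forall>i<length Ws. \<forall>u\<in>Ws ! i. \<forall>v\<in>Ws ! i. E u v \<longrightarrow> k u \<noteq> k v"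
proof -
  have disjoint: "Ws ! i \<inter> Ws ! j = {}" if "i < length Ws" "j < length Ws" "i \<noteq> j" for i j
    using assms(1) that unfolding grading_def by blast
  have part_sub: "Ws ! i \<subseteq> C" if "i < length Ws" for i
    using assms(1) that unfolding grading_def by auto
  have "colourable (Ws ! i) E w" if "i < length Ws" for i
    using assms(2-4) part_sub[OF that] colourable_iff_chromatic_le finite_subset
    unfolding grading_colourable_def by (metis subsetD that)
  then have "\<forall>i. \<exists>f::'a \<Rightarrow> nat. i < length Ws \<longrightarrow> (\<forall>v\<in>Ws ! i. f v < w) \<and>
      (\<forall>u\<in>Ws ! i. \<forall>v\<in>Ws ! i. E u v \<longrightarrow> f u \<noteq> f v)"
    unfolding colourable_def by blast
  then obtain c where c: "\<forall>i<length Ws. (\<forall>v\<in>Ws ! i. c i v < w) \<and>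
      (\<forall>u\<in>Ws ! i. \<forall>v\<in>Ws ! i. E u v \<longrightarrow> c i u \<noteq> c i v)"
    by (rule choice[THEN exE]) blast
  define part where "part v = (SOME i. i < length Ws \<and> v \<in> Ws ! i)" for v
  have part: "part v = i" if "i < length Ws" "v \<in> Ws ! i" for i v
  proof -
    have "part v < length Ws \<and> v \<in> Ws ! part v"
      using someI[of "\<lambda>j. j < length Ws \<and> v \<in> Ws ! j" i] that unfolding part_def by blast
    then show ?thesis
      using disjoint that by blast
  qed
  have "\<forall>v\<in>C. c (part v) v < w"
    using assms(1) c part unfolding grading_def by (auto simp: in_set_conv_nth)
  moreover have "\<forall>i<length Ws. \<forall>u\<in>Ws ! i. \<forall>v\<in>Ws ! i. E u v \<longrightarrow> c (part u) u \<noteq> c (part v) v"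
    using c part by simp
  ultimately show ?thesis
    using that[of "\<lambda>v. c (part v) v"] by blast
qed

lemma clique_insert_earliest_parent:
  assumes "graph V E" "B \<subseteq> V" "C \<subseteq> V" "covers E B C" "enumeration bs B"
    and "compatible E bs Ws C"
    and K: "clique C E K" "u \<in> K"
    and before: "\<And>x. x \<in> K \<Longrightarrow> x \<noteq> u \<Longrightarrow> grading_earlier Ws x u \<and> \<not> square_edge E bs C x u"
  shows "clique V E (insert (earliest_parent E bs u) K)" "earliest_parent E bs u \<notin> K"
proof -
  let ?p = "earliest_parent E bs"
  have sym: "\<And>x y. E x y \<Longrightarrow> E y x"
    using assms(1) unfolding graph_def by blast
  have parent: "\<exists>b\<in>set bs. E b v" if "v \<in> C" for v
    using assms(4,5) that unfolding covers_def enumeration_def by blast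
  have KC: "K \<subseteq> C" and uC: "u \<in> C"
    using K unfolding clique_def by auto
  have pu: "?p u \<in> B" "E (?p u) u"
    using earliest_parent_adjacent[of bs E u] parent[OF uC] assms(5) unfolding enumeration_def by auto
  have "E (?p u) x" if x: "x \<in> K" "x \<noteq> u" for x
  proof -
    have xC: "x \<in> C"
      using x KC by blast
    have "grading_earlier Ws x u"
      using before[OF x] by blast
    then have "earlier_in bs (?p x) (?p u)"
      using assms(6) xC uC unfolding compatible_def by blast
    then have "\<not> E (?p x) u"
      using not_adjacent_if_earlier_than_earliest_parent[of bs E u "?p x"] parent[OF uC] assms(5)
      unfolding enumeration_def by blast
    moreover have "E x u"
      using K x unfolding clique_def by blast
    ultimately show ?thesis
      using before[OF x] xC uC unfolding square_edge_def by blast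
  qed
  then have "E (?p u) x" if "x \<in> K" for x
    using that pu(2) by (cases "x = u") auto
  then show "clique V E (insert (?p u) K)"
    using K pu(1) assms(2,3) sym unfolding clique_def by auto
  show "?p u \<notin> K"
    using pu(1) KC assms(4) unfolding covers_def by blast
qed

lemma clique_number_less_of_square_free:
  assumes "graph V E" "B \<subseteq> V" "C \<subseteq> V" "covers E B C" "enumeration bs B"
    and "grading Ws C" "compatible E bs Ws C"
    and Y: "Y \<subseteq> C" "Y \<noteq> {}"
    and no_square: "\<And>x u. x \<in> Y \<Longrightarrow> u \<in> Y \<Longrightarrow> \<not> square_edge E bs C x u"
    and no_part_edge: "\<And>i x u. i < length Ws \<Longrightarrow> x \<in> Y \<Longrightarrow> u \<in> Y \<Longrightarrow>
        x \<in> Ws ! i \<Longrightarrow> u \<in> Ws ! i \<Longrightarrow> \<not> E x u"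
  shows "clique_number Y E < clique_number V E"
proof (rule clique_number_less)
  show finV: "finite V" "Y \<subseteq> V"
    using assms(1,3) Y(1) unfolding graph_def by auto
  fix K
  assume K: "clique Y E K"
  show "\<exists>K'. clique V E K' \<and> card K < card K'"
  proof (cases "K = {}")
    case True
    obtain y where "y \<in> Y"
      using Y(2) by blast
    then have "clique V E {y}"
      using finV(2) unfolding clique_def by auto
    then show ?thesis
      using True by force
  next
    case False
    have KY: "K \<subseteq> Y"
      using K unfolding clique_def by auto
    then have finK: "finite K"
      using finV by (meson finite_subset subset_trans)
    have KC: "K \<subseteq> C"
      using KY Y(1) by blast
    obtain u where u: "u \<in> K" and latest:
      "\<forall>x\<in>K. grading_earlier Ws x u \<or> (\<exists>i<length Ws. x \<in> Ws ! i \<and> u \<in> Ws ! i)"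
      using grading_latest_vertex[OF assms(6) KC finK False] by blast
    have "grading_earlier Ws x u \<and> \<not> square_edge E bs C x u" if "x \<in> K" "x \<noteq> u" for x
      using latest that(1) no_part_edge no_square K that u KY unfolding clique_def by blast
    moreover have "clique C E K"
      using K Y(1) unfolding clique_def by auto
    ultimately have "clique V E (insert (earliest_parent E bs u) K)"
      "earliest_parent E bs u \<notin> K"
      using clique_insert_earliest_parent[OF assms(1-5,7)] u by blast+
    then show ?thesis
      using finK by (intro exI[of _ "insert (earliest_parent E bs u) K"]) simp
  qed
qed

lemma colourable_of_square_free:
  assumes "graph V E" "B \<subseteq> V" "C \<subseteq> V" "covers E B C"
    and "\<forall>S. S \<subseteq> V \<longrightarrow> clique_number S E < clique_number V E \<longrightarrow> chromatic S E \<le> \<tau>"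
    and "enumeration bs B" "grading Ws C" "compatible E bs Ws C"
    and Y: "Y \<subseteq> C"
    and no_square: "\<And>x u. x \<in> Y \<Longrightarrow> u \<in> Y \<Longrightarrow> \<not> square_edge E bs C x u"
    and no_part_edge: "\<And>i x u. i < length Ws \<Longrightarrow> x \<in> Y \<Longrightarrow> u \<in> Y \<Longrightarrow>
        x \<in> Ws ! i \<Longrightarrow> u \<in> Ws ! i \<Longrightarrow> \<not> E x u"
  shows "colourable Y E \<tau>"
proof (cases "Y = {}")
  case True
  show ?thesis
    unfolding True colourable_def by simp
next
  case False
  have "clique_number Y E < clique_number V E"
    using clique_number_less_of_square_free[OF assms(1-4,6-8) Y False no_square no_part_edge] .
  moreover have YV: "Y \<subseteq> V"
    using assms(3) Y by blast
  ultimately have "chromatic Y E \<le> \<tau>"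
    using assms(5) by blast
  moreover have "finite Y" "\<And>v. \<not> E v v"
    using assms(1) YV finite_subset unfolding graph_def by auto
  ultimately show ?thesis
    using colourable_iff_chromatic_le by blast
qed

theorem mainTheorem5:
  fixes V :: "'a set" and E :: "'a \<Rightarrow> 'a \<Rightarrow> bool"
    and B C :: "'a set" and bs :: "'a list" and Ws :: "'a set list"
    and \<tau> w :: nat
  assumes "graph V E"
    and "B \<subseteq> V" and "C \<subseteq> V"
    and "covers E B C"
    and "\<forall>S. S \<subseteq> V \<longrightarrow> clique_number S E < clique_number V E \<longrightarrow> chromatic S E \<le> \<tau>"
    and "enumeration bs B"
    and "grading Ws C"
    and "compatible E bs Ws C"
    and "grading_colourable E Ws w"
  shows "chromatic C E \<le> w * \<tau> * chromatic C (square_edge E bs C)"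
proof -
  let ?H = "square_edge E bs C" and ?\<chi>H = "chromatic C (square_edge E bs C)"
  have finC: "finite C" and irrefl: "\<And>v. \<not> E v v"
    using assms(1,3) finite_subset unfolding graph_def by auto
  have "colourable C ?H ?\<chi>H"
    using colourable_iff_chromatic_le[OF finC] irrefl by (simp add: square_edge_def)
  then obtain h where h: "\<forall>v\<in>C. h v < ?\<chi>H" "\<forall>x\<in>C. \<forall>u\<in>C. ?H x u \<longrightarrow> h x \<noteq> h u"
    unfolding colourable_def by blast
  obtain k where k: "\<forall>v\<in>C. k v < w"
    "\<forall>i<length Ws. \<forall>x\<in>Ws ! i. \<forall>u\<in>Ws ! i. E x u \<longrightarrow> k x \<noteq> k u"
    using grading_part_colouring[OF assms(7) finC irrefl assms(9)] by blast
  have "colourable {v\<in>{v\<in>C. h v = a}. k v = b} E \<tau>" (is "colourable ?Y E \<tau>") for a b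
  proof (rule colourable_of_square_free[OF assms(1-8)])
    show "\<not> ?H x u" if "x \<in> ?Y" "u \<in> ?Y" for x u
      using h(2)[rule_format, of x u] that by auto
    show "\<not> E x u" if "i < length Ws" "x \<in> ?Y" "u \<in> ?Y" "x \<in> Ws ! i" "u \<in> Ws ! i" for i x u
      using k(2)[rule_format, of i x u] that by auto
  qed auto
  then have "colourable {v\<in>C. h v = a} E (w * \<tau>)" for a
    using colourable_by_fibres[of "{v\<in>C. h v = a}" k w] k(1) by simp
  then have "colourable C E (?\<chi>H * (w * \<tau>))"
    using colourable_by_fibres[of C h ?\<chi>H] h(1) by blast
  then show ?thesis
    using chromatic_le by (simp add: ac_simps)
qed

end
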